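(* Let $L=\mathbb Z^2$ with $B(x,y)=x\begin{pmatrix}2&1\\1&8\end{pmatrix}y^T$, $Q(x)=\frac12B(x,x)$, and for $\alpha,\beta\in\mathbb Q^2$ put $\theta_{\alpha,\beta}(\tau,z)=\sum_{v\in\mathbb Z^2}e(B(\beta,v))\,e(\tau Q(\alpha+v)+B(\alpha+v,z))$ on $\mathbb H\times\mathbb C^2$. Then the 25 functions $\theta_{\alpha,\beta}^5$ with $\alpha\in\{(0,0),(\frac15,\frac35),(\frac25,\frac15),(\frac35,\frac45),(\frac45,\frac25)\}$ and $\beta\in\{(\frac j5,0):j=0,1,2,3,4\}$ are $\mathbb C$-linearly independent.
   Context: $e(x)=\exp(2\pi ix)$, $\mathbb H$ the upper half plane; $B$ is extended bilinearly to $\mathbb C^2$. *)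

theory Defs
  imports "HOL-Analysis.Analysis"
begin

definition e :: "complex \<Rightarrow> complex" where
  "e x = exp (2 * of_real pi * \<i> * x)"

definition B :: "complex \<times> complex \<Rightarrow> complex \<times> complex \<Rightarrow> complex" where
  "B x y = 2 * fst x * fst y + fst x * snd y + snd x * fst y + 8 * snd x * snd y"

definition Q :: "complex \<times> complex \<Rightarrow> complex" where
  "Q x = B x x / 2"

definition ratv :: "rat \<times> rat \<Rightarrow> complex \<times> complex" where
  "ratv a = (of_rat (fst a), of_rat (snd a))"

definition intv :: "int \<times> int \<Rightarrow> complex \<times> complex" where
  "intv v = (of_int (fst v), of_int (snd v))"

text \<open>theta_{alpha,beta}(tau,z) = sum over v in Z^2 (absolutely convergent on H x C^2).\<close>
definition theta :: "rat \<times> rat \<Rightarrow> rat \<times> rat \<Rightarrow> complex \<Rightarrow> complex \<times> complex \<Rightarrow> complex" where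
  "theta \<alpha> \<beta> \<tau> z =
     (\<Sum>\<^sub>\<infinity>v\<in>(UNIV :: (int \<times> int) set).
        e (B (ratv \<beta>) (intv v)) * e (\<tau> * Q (ratv \<alpha> + intv v) + B (ratv \<alpha> + intv v) z))"

definition alphas :: "nat \<Rightarrow> rat \<times> rat" where
  "alphas k = [(0, 0), (1/5, 3/5), (2/5, 1/5), (3/5, 4/5), (4/5, 2/5)] ! k"

definition betas :: "nat \<Rightarrow> rat \<times> rat" where
  "betas j = (of_nat j / 5, 0)"

end

theory Submission
  imports Defs
begin

text \<open>
  Restrict to \<tau> = i t and z = l - i t y with y, l real. Completing the square, the theta
  function with characteristics (\<alpha>, \<beta>) times exp (- 2 \<pi> t Q y) is a sum of unimodular
  phases times exp (- 2 \<pi> t Q (\<alpha> + v - y)) over v in Z^2, so as t \<rightarrow> \<infinity> each fifth power is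
  governed by the points of \<alpha> + Z^2 nearest to y, and in a vanishing linear combination the
  coefficient of the slowest exponential must vanish. Taking y = \<alpha>_k isolates the k-th row and
  gives \<Sum>_j c_kj = 0. Taking y = \<alpha>_k + (1/2, 0) makes \<alpha>_k and \<alpha>_k + (1, 0) the two nearest
  points; every other row either decays faster or has a leading term independent of j, which
  cancels by the first step. What remains is \<Sum>_j c_kj (1 + \<zeta>^j \<mu>)^5 = 0 with \<zeta> = e(2/5) for
  all \<mu> on the unit circle; comparing coefficients of \<mu> and inverting the discrete Fourier
  transform gives c_kj = 0.
\<close>

section \<open>The quadratic form and embeddings\<close>

definition of_rat2 :: "rat \<times> rat \<Rightarrow> real \<times> real" where
  "of_rat2 a = (of_rat (fst a), of_rat (snd a))"

definition of_int2 :: "int \<times> int \<Rightarrow> real \<times> real" where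
  "of_int2 v = (of_int (fst v), of_int (snd v))"

definition of_real2 :: "real \<times> real \<Rightarrow> complex \<times> complex" where
  "of_real2 p = (of_real (fst p), of_real (snd p))"

definition B_real :: "real \<times> real \<Rightarrow> real \<times> real \<Rightarrow> real" where
  "B_real x y = 2 * fst x * fst y + fst x * snd y + snd x * fst y + 8 * snd x * snd y"

definition Q_real :: "real \<times> real \<Rightarrow> real" where
  "Q_real p = fst p ^ 2 + fst p * snd p + 4 * snd p ^ 2"

lemma ratv_eq_of_real2: "ratv a = of_real2 (of_rat2 a)"
proof -
  have "(of_rat q :: complex) = of_real (of_rat q)" for q
    by (cases q) (simp add: of_rat_rat)
  then show ?thesis
    by (simp add: ratv_def of_rat2_def of_real2_def)
qed

lemma intv_eq_of_real2: "intv v = of_real2 (of_int2 v)"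
  by (simp add: intv_def of_int2_def of_real2_def)

lemma B_of_real2: "B (of_real2 x) (of_real2 y) = of_real (B_real x y)"
  by (simp add: B_def B_real_def of_real2_def)

lemma Q_real_sum_squares_le: "fst p ^ 2 + snd p ^ 2 \<le> 2 * Q_real p"
proof -
  have "2 * Q_real p = fst p ^ 2 + snd p ^ 2 + (fst p + snd p) ^ 2 + 6 * snd p ^ 2"
    by (simp add: Q_real_def power2_eq_square algebra_simps)
  then show ?thesis
    by (smt (verit) zero_le_power2)
qed

lemma Q_real_nonneg: "0 \<le> Q_real p"
  using Q_real_sum_squares_le[of p] by (smt (verit) zero_le_power2)

lemma four_Q_real: "4 * Q_real p = (2 * fst p + snd p) ^ 2 + 15 * snd p ^ 2"
  by (simp add: Q_real_def power2_eq_square algebra_simps)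

lemma twenty_Q_real: "20 * Q_real p = 5 * (2 * fst p + snd p) ^ 2 + 75 * snd p ^ 2"
  by (simp add: Q_real_def power2_eq_square algebra_simps)

lemma Q_real_of_int2_lt_1_iff: "Q_real (of_int2 v) < 1 \<longleftrightarrow> v = (0, 0)"
proof
  obtain a b where v: "v = (a, b)"
    by fastforce
  assume "Q_real (of_int2 v) < 1"
  moreover have "of_int ((2 * a + b) ^ 2 + 15 * b ^ 2) = 4 * Q_real (of_int2 v)"
    by (simp add: four_Q_real v of_int2_def)
  ultimately have "real_of_int ((2 * a + b) ^ 2 + 15 * b ^ 2) < 4"
    by linarith
  then have "(2 * a + b) ^ 2 + 15 * b ^ 2 < 4"
    by (simp only: of_int_less_numeral_iff)
  then have "b = 0"
    using zero_le_power2[of "2 * a + b"] power2_less_eq_zero_iff[of b] by fastforce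
  then show "v = (0, 0)"
    using \<open>(2 * a + b) ^ 2 + 15 * b ^ 2 < 4\<close> abs_le_square_iff[of 1 a] by (auto simp: v)
qed (simp add: Q_real_def of_int2_def)

lemma Q_real_of_int2_half_shift_lt_iff:
  "Q_real (of_int2 v - (1 / 2, 0)) < 9 / 4 \<longleftrightarrow> v \<in> {(0, 0), (1, 0)}"
proof
  obtain a b where v: "v = (a, b)"
    by fastforce
  assume "Q_real (of_int2 v - (1 / 2, 0)) < 9 / 4"
  moreover have "of_int ((2 * a - 1 + b) ^ 2 + 15 * b ^ 2) = 4 * Q_real (of_int2 v - (1 / 2, 0))"
    by (simp add: four_Q_real v of_int2_def)
  ultimately have "real_of_int ((2 * a - 1 + b) ^ 2 + 15 * b ^ 2) < 9"
    by linarith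
  then have small: "(2 * a - 1 + b) ^ 2 + 15 * b ^ 2 < 9"
    by (simp only: of_int_less_numeral_iff)
  then have "b = 0"
    using zero_le_power2[of "2 * a - 1 + b"] power2_less_eq_zero_iff[of b] by fastforce
  then have "\<bar>2 * a - 1\<bar> < 3"
    using small abs_le_square_iff[of 3 "2 * a - 1"] by simp
  then show "v \<in> {(0, 0), (1, 0)}"
    using \<open>b = 0\<close> by (auto simp: v)
qed (auto simp: Q_real_def of_int2_def power2_eq_square)

lemma Q_real_of_int2_half_shift_ge: "1 / 4 \<le> Q_real (of_int2 v - (1 / 2, 0))"
  using Q_real_of_int2_half_shift_lt_iff[of v]
  by (cases "v \<in> {(0, 0), (1, 0)}") (auto simp: Q_real_def of_int2_def power2_eq_square)

section \<open>Gaussian lattice sums\<close>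

lemma summable_on_exp_neg_abs_int:
  fixes a :: real
  assumes "a > 0"
  shows "(\<lambda>n::int. exp (- a * \<bar>of_int n\<bar>)) summable_on UNIV"
proof -
  let ?f = "\<lambda>n::int. exp (- a * \<bar>of_int n\<bar>)"
  have geom: "summable (\<lambda>n. exp (- a) ^ n)"
    by (rule summable_geometric) (use assms in simp)
  have UNIV_int: "(UNIV :: int set) = range int \<union> range (\<lambda>n. - int (Suc n))"
  proof -
    have "x \<in> range int \<union> range (\<lambda>n. - int (Suc n))" for x :: int
    proof (cases "x \<ge> 0")
      case True
      then show ?thesis by (metis UnI1 nonneg_int_cases rangeI)
    next
      case False
      then have "x = - int (Suc (nat (- x - 1)))" by simp
      then show ?thesis by blast
    qed
    then show ?thesis by blast
  qed
  have "(?f \<circ> int) summable_on UNIV"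
  proof -
    have "?f \<circ> int = (\<lambda>n. exp (- a) ^ n)"
      by (auto simp: fun_eq_iff simp flip: exp_of_nat_mult)
    then show ?thesis
      using geom by (simp add: summable_on_UNIV_nonneg_real_iff)
  qed
  then have nonneg: "?f summable_on range int"
    by (subst summable_on_reindex) auto
  have "(?f \<circ> (\<lambda>n. - int (Suc n))) summable_on UNIV"
  proof -
    have "?f \<circ> (\<lambda>n. - int (Suc n)) = (\<lambda>n. exp (- a) * exp (- a) ^ n)"
      by (auto simp: fun_eq_iff algebra_simps simp flip: exp_of_nat_mult exp_add)
    then show ?thesis
      using geom by (simp add: summable_on_UNIV_nonneg_real_iff summable_mult)
  qed
  then have neg: "?f summable_on range (\<lambda>n. - int (Suc n))"
    by (subst summable_on_reindex) (auto simp: inj_on_def)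
  show ?thesis
    unfolding UNIV_int by (rule summable_on_Un_disjoint[OF nonneg neg]) auto
qed

lemma summable_on_exp_neg_abs_int2:
  fixes a :: real
  assumes "a > 0"
  shows "(\<lambda>v::int \<times> int. exp (- a * \<bar>of_int (fst v)\<bar>) * exp (- a * \<bar>of_int (snd v)\<bar>))
           summable_on UNIV"
proof -
  define f where "f n = exp (- a * \<bar>of_int n\<bar>)" for n :: int
  have f: "f summable_on UNIV"
    unfolding f_def using assms by (rule summable_on_exp_neg_abs_int)
  have "(\<lambda>v. f (fst v) * f (snd v)) summable_on Sigma UNIV (\<lambda>_. UNIV)"
  proof (rule summable_on_SigmaI[where g = "\<lambda>x. f x * infsum f UNIV"])
    show "((\<lambda>y. f (fst (x, y)) * f (snd (x, y))) has_sum f x * infsum f UNIV) UNIV" for x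
      using f by (simp add: has_sum_cmult_right)
    show "(\<lambda>x. f x * infsum f UNIV) summable_on UNIV"
      using f by (rule summable_on_cmult_left)
  qed (simp add: f_def)
  then show ?thesis
    by (simp add: f_def)
qed

lemma summable_on_exp_Q_real:
  "(\<lambda>v. exp (- 2 * pi * Q_real (of_int2 v + c))) summable_on UNIV"
proof -
  define K where "K = exp (pi * (\<bar>fst c\<bar> + \<bar>snd c\<bar>) + pi / 2)"
  have sq_ge_abs: "\<bar>x\<bar> - 1 / 4 \<le> x ^ 2" for x :: real
    using zero_le_power2[of "\<bar>x\<bar> - 1 / 2"] by (simp add: power2_eq_square algebra_simps)
  have bound: "exp (- 2 * pi * Q_real (of_int2 v + c))
                 \<le> K * (exp (- pi * \<bar>of_int (fst v)\<bar>) * exp (- pi * \<bar>of_int (snd v)\<bar>))" for v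
  proof -
    define p1 where "p1 = of_int (fst v) + fst c"
    define p2 where "p2 = of_int (snd v) + snd c"
    have "p1 ^ 2 + p2 ^ 2 \<le> 2 * Q_real (of_int2 v + c)"
      using Q_real_sum_squares_le[of "of_int2 v + c"] by (simp add: of_int2_def p1_def p2_def)
    moreover have "\<bar>of_int (fst v)\<bar> - \<bar>fst c\<bar> \<le> \<bar>p1\<bar>" "\<bar>of_int (snd v)\<bar> - \<bar>snd c\<bar> \<le> \<bar>p2\<bar>"
      unfolding p1_def p2_def by linarith+
    ultimately have "\<bar>of_int (fst v)\<bar> + \<bar>of_int (snd v)\<bar> - (\<bar>fst c\<bar> + \<bar>snd c\<bar>) - 1 / 2
                       \<le> 2 * Q_real (of_int2 v + c)"
      using sq_ge_abs[of p1] sq_ge_abs[of p2] by linarith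
    then have "- 2 * pi * Q_real (of_int2 v + c)
                 \<le> (pi * (\<bar>fst c\<bar> + \<bar>snd c\<bar>) + pi / 2) + - pi * \<bar>of_int (fst v)\<bar> + - pi * \<bar>of_int (snd v)\<bar>"
      using mult_left_mono[OF _ pi_ge_zero] by (fastforce simp: algebra_simps)
    then show ?thesis
      by (simp add: K_def flip: exp_add)
  qed
  have "(\<lambda>v::int \<times> int. K * (exp (- pi * \<bar>of_int (fst v)\<bar>) * exp (- pi * \<bar>of_int (snd v)\<bar>)))
          summable_on UNIV"
    by (intro summable_on_cmult_right summable_on_exp_neg_abs_int2) simp
  then show ?thesis
    by (rule summable_on_comparison_test[OF _ bound]) simp
qed

lemma norm_power_diff_le:
  fixes a b :: "'a::real_normed_field"
  assumes "norm a \<le> E" "norm b \<le> E"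
  shows "norm (a ^ n - b ^ n) \<le> n * E ^ (n - 1) * norm (a - b)"
proof -
  have E: "0 \<le> E"
    using assms(1) norm_ge_zero order_trans by blast
  have "norm (b ^ (n - Suc i) * a ^ i) \<le> E ^ (n - 1)" if "i < n" for i
  proof -
    have "norm (b ^ (n - Suc i) * a ^ i) \<le> E ^ (n - Suc i) * E ^ i"
      unfolding norm_mult norm_power using assms E by (intro mult_mono power_mono) auto
    also have "\<dots> = E ^ (n - 1)"
      using that by (simp flip: power_add)
    finally show ?thesis .
  qed
  then have "norm (\<Sum>i<n. b ^ (n - Suc i) * a ^ i) \<le> card {..<n} * E ^ (n - 1)"
    by (intro sum_norm_bound) simp
  then have "norm (a - b) * norm (\<Sum>i<n. b ^ (n - Suc i) * a ^ i) \<le> norm (a - b) * (n * E ^ (n - 1))"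
    by (intro mult_left_mono) simp_all
  then show ?thesis
    unfolding power_diff_sumr2[of a n b] norm_mult by (simp only: mult_ac)
qed

lemma norm_infsum_minus_sum_le:
  fixes f :: "'a \<Rightarrow> 'b::banach"
  assumes f: "(\<lambda>v. norm (f v)) summable_on UNIV" and M: "finite M"
  shows "norm ((\<Sum>\<^sub>\<infinity>v. f v) - sum f M) \<le> (\<Sum>\<^sub>\<infinity>v\<in>UNIV - M. norm (f v))"
proof -
  have "f summable_on (UNIV - M)"
    by (rule summable_on_subset_banach[OF abs_summable_summable[OF f]]) simp
  then have "(\<Sum>\<^sub>\<infinity>v. f v) = sum f M + (\<Sum>\<^sub>\<infinity>v\<in>UNIV - M. f v)"
    using infsum_Un_disjoint[of f M "UNIV - M"] M by simp
  moreover have "norm (\<Sum>\<^sub>\<infinity>v\<in>UNIV - M. f v) \<le> (\<Sum>\<^sub>\<infinity>v\<in>UNIV - M. norm (f v))"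
    by (intro norm_infsum_bound summable_on_subset_banach[OF f]) simp
  ultimately show ?thesis
    by simp
qed

lemma gaussian_sum_tail_le:
  fixes u :: "'a \<Rightarrow> complex" and q :: "'a \<Rightarrow> real"
  assumes u: "\<And>v. norm (u v) \<le> 1" and q: "\<And>v. 0 \<le> q v"
    and summable: "(\<lambda>v. exp (- 2 * pi * q v)) summable_on UNIV"
    and M: "finite M" and far: "\<And>v. v \<notin> M \<Longrightarrow> d \<le> q v" and t: "1 \<le> t"
  shows "norm ((\<Sum>\<^sub>\<infinity>v. u v * exp (- 2 * pi * t * q v)) - (\<Sum>v\<in>M. u v * exp (- 2 * pi * t * q v)))
           \<le> (\<Sum>\<^sub>\<infinity>v. exp (- 2 * pi * q v)) * exp (- 2 * pi * (t - 1) * d)"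
proof -
  define f where "f v = u v * exp (- 2 * pi * t * q v)" for v
  define g where "g v = exp (- 2 * pi * q v)" for v
  have g: "g summable_on UNIV"
    using summable by (simp add: g_def [abs_def])
  have f_le: "norm (f v) \<le> g v * exp (- 2 * pi * (t - 1) * q v)" for v
  proof -
    have "norm (f v) \<le> exp (- 2 * pi * t * q v)"
      using u[of v] by (simp add: f_def norm_mult mult_left_le_one_le)
    also have "\<dots> = g v * exp (- 2 * pi * (t - 1) * q v)"
      by (simp add: g_def algebra_simps flip: exp_add)
    finally show ?thesis .
  qed
  have "exp (- 2 * pi * (t - 1) * q v) \<le> 1" for v
    using q[of v] t by (simp add: mult_nonneg_nonneg)
  then have "norm (f v) \<le> g v" for v
    using f_le[of v] by (smt (verit) exp_gt_zero g_def mult_left_le)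
  then have f_abs: "(\<lambda>v. norm (f v)) summable_on UNIV"
    by (intro summable_on_comparison_test[OF g]) simp_all
  have f_tail: "norm (f v) \<le> g v * exp (- 2 * pi * (t - 1) * d)" if "v \<notin> M" for v
  proof -
    have "exp (- 2 * pi * (t - 1) * q v) \<le> exp (- 2 * pi * (t - 1) * d)"
      using far[OF that] t by (simp add: mult_left_mono)
    then show ?thesis
      using f_le[of v] by (smt (verit) exp_gt_zero g_def mult_left_mono)
  qed
  have g_tail: "g summable_on UNIV - M"
    by (rule summable_on_subset[OF g]) simp
  have "norm (infsum f UNIV - sum f M) \<le> (\<Sum>\<^sub>\<infinity>v\<in>UNIV - M. norm (f v))"
    by (rule norm_infsum_minus_sum_le[OF f_abs M])
  also have "\<dots> \<le> (\<Sum>\<^sub>\<infinity>v\<in>UNIV - M. g v * exp (- 2 * pi * (t - 1) * d))"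
    using f_tail g_tail
    by (intro infsum_mono summable_on_cmult_left summable_on_subset_banach[OF f_abs]) auto
  also have "\<dots> \<le> infsum g UNIV * exp (- 2 * pi * (t - 1) * d)"
    unfolding infsum_cmult_left' by (intro mult_right_mono infsum_mono_neutral g_tail g) (auto simp: g_def)
  finally show ?thesis
    unfolding f_def [abs_def] g_def [abs_def] .
qed

section \<open>Theta functions on the imaginary axis\<close>

lemma norm_e_of_real: "norm (e (of_real x)) = 1"
  by (simp add: e_def norm_exp)

lemma e_add: "e (x + y) = e x * e y"
  by (simp add: e_def distrib_left exp_add)

lemma e_power: "e x ^ n = e (of_nat n * x)"
  by (simp add: e_def algebra_simps flip: exp_of_nat_mult)

lemma e_of_int: "e (of_int n) = 1"
  unfolding e_def by (subst exp_eq_1) (auto intro!: exI[of _ n] simp: algebra_simps)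

lemma e_of_real_eq_1_imp_Ints: "e (of_real x) = 1 \<Longrightarrow> x \<in> \<int>"
proof -
  assume "e (of_real x) = 1"
  then obtain n :: int where "2 * pi * x = of_int (2 * n) * pi"
    unfolding e_def exp_eq_1 by auto
  then have "x = of_int n"
    by (simp add: algebra_simps)
  then show ?thesis
    by simp
qed

definition z_at :: "real \<times> real \<Rightarrow> real \<times> real \<Rightarrow> real \<Rightarrow> complex \<times> complex" where
  "z_at y l t = (of_real (fst l) - \<i> * of_real t * of_real (fst y),
                 of_real (snd l) - \<i> * of_real t * of_real (snd y))"

definition theta_phase :: "rat \<times> rat \<Rightarrow> rat \<times> rat \<Rightarrow> real \<times> real \<Rightarrow> int \<times> int \<Rightarrow> complex" where
  "theta_phase \<alpha> \<beta> l v = e (B (ratv \<beta>) (intv v)) * e (of_real (B_real (of_rat2 \<alpha> + of_int2 v) l))"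

definition theta_normalized ::
    "rat \<times> rat \<Rightarrow> rat \<times> rat \<Rightarrow> real \<times> real \<Rightarrow> real \<times> real \<Rightarrow> real \<Rightarrow> complex" where
  "theta_normalized \<alpha> \<beta> y l t =
     theta \<alpha> \<beta> (\<i> * of_real t) (z_at y l t) * of_real (exp (- 2 * pi * t * Q_real y))"

definition theta_partial ::
    "rat \<times> rat \<Rightarrow> rat \<times> rat \<Rightarrow> real \<times> real \<Rightarrow> real \<times> real \<Rightarrow> (int \<times> int) set \<Rightarrow> real \<Rightarrow> complex" where
  "theta_partial \<alpha> \<beta> y l M t =
     (\<Sum>v\<in>M. theta_phase \<alpha> \<beta> l v * of_real (exp (- 2 * pi * t * Q_real (of_rat2 \<alpha> + of_int2 v - y))))"

lemma norm_theta_phase: "norm (theta_phase \<alpha> \<beta> l v) = 1"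
  by (simp add: theta_phase_def norm_mult ratv_eq_of_real2 intv_eq_of_real2 B_of_real2 norm_e_of_real)

lemma theta_phase_origin: "theta_phase \<alpha> \<beta> l (0, 0) = e (of_real (B_real (of_rat2 \<alpha>) l))"
  by (simp add: theta_phase_def B_def intv_def of_int2_def e_def flip: zero_prod_def)

lemma theta_phase_betas_unit:
  "theta_phase \<alpha> (betas j) (x / 2, 0) (1, 0)
     = e (of_real (B_real (of_rat2 \<alpha>) (x / 2, 0))) * (e (2 / 5) ^ j * e (of_real x))"
proof -
  have B: "B (ratv (betas j)) (intv (1, 0)) = of_nat j * (2 / 5)"
    by (simp add: B_def betas_def ratv_def intv_def of_rat_divide)
  have B_real: "B_real (of_rat2 \<alpha> + of_int2 (1, 0)) (x / 2, 0) = B_real (of_rat2 \<alpha>) (x / 2, 0) + x"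
    by (simp add: B_real_def of_int2_def algebra_simps)
  show ?thesis
    unfolding theta_phase_def B B_real of_real_add e_add e_power by (simp add: mult_ac)
qed

lemma theta_phase_betas_power:
  "theta_phase \<alpha> (betas j) l v ^ 5 = e (of_real (B_real (of_rat2 \<alpha> + of_int2 v) l)) ^ 5"
proof -
  have "of_nat 5 * B (ratv (betas j)) (intv v) = of_int (int j * (2 * fst v + snd v))"
    by (simp add: B_def betas_def ratv_def intv_def of_rat_divide algebra_simps)
  then have "e (B (ratv (betas j)) (intv v)) ^ 5 = 1"
    by (simp only: e_power e_of_int)
  then show ?thesis
    by (simp add: theta_phase_def power_mult_distrib)
qed

lemma theta_partial_singleton_betas_power:
  "theta_partial \<alpha> (betas j) y l {v} t ^ 5
     = (e (of_real (B_real (of_rat2 \<alpha> + of_int2 v) l))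
         * of_real (exp (- 2 * pi * t * Q_real (of_rat2 \<alpha> + of_int2 v - y)))) ^ 5"
  by (simp add: theta_partial_def power_mult_distrib theta_phase_betas_power)

lemma theta_partial_half_shift:
  "theta_partial \<alpha> (betas j) (of_rat2 \<alpha> + (1 / 2, 0)) (x / 2, 0) {(0, 0), (1, 0)} t
     = of_real (exp (- 2 * pi * t * (1 / 4)))
       * (e (of_real (B_real (of_rat2 \<alpha>) (x / 2, 0))) * (1 + e (2 / 5) ^ j * e (of_real x)))"
proof -
  have Q: "Q_real (of_int2 (0, 0) - (1 / 2, 0)) = 1 / 4" "Q_real (of_int2 (1, 0) - (1 / 2, 0)) = 1 / 4"
    by (simp_all add: Q_real_def of_int2_def power2_eq_square)
  have phases: "theta_phase \<alpha> (betas j) (x / 2, 0) (0, 0) + theta_phase \<alpha> (betas j) (x / 2, 0) (1, 0)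
                  = e (of_real (B_real (of_rat2 \<alpha>) (x / 2, 0))) * (1 + e (2 / 5) ^ j * e (of_real x))"
    unfolding theta_phase_origin theta_phase_betas_unit by (simp only: distrib_left mult_1_right)
  show ?thesis
    by (simp add: theta_partial_def Q flip: phases distrib_right)
qed

lemma e_gaussian_completing_square:
  "e (\<i> * of_real t * Q (of_real2 x) + B (of_real2 x) (z_at y l t)) * of_real (exp (- 2 * pi * t * Q_real y))
     = e (of_real (B_real x l)) * of_real (exp (- 2 * pi * t * Q_real (x - y)))"
proof -
  obtain x1 x2 y1 y2 l1 l2 where "x = (x1, x2)" "y = (y1, y2)" "l = (l1, l2)"
    by (metis prod.exhaust)
  then have "2 * of_real pi * \<i> * (\<i> * of_real t * Q (of_real2 x) + B (of_real2 x) (z_at y l t))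
               + of_real (- 2 * pi * t * Q_real y)
             = 2 * of_real pi * \<i> * of_real (B_real x l) + of_real (- 2 * pi * t * Q_real (x - y))"
    by (simp add: Q_def B_def Q_real_def B_real_def z_at_def of_real2_def power2_eq_square field_simps)
  then show ?thesis
    unfolding e_def exp_of_real [symmetric] exp_add [symmetric] by simp
qed

lemma theta_normalized_eq_infsum:
  "theta_normalized \<alpha> \<beta> y l t =
     (\<Sum>\<^sub>\<infinity>v. theta_phase \<alpha> \<beta> l v * of_real (exp (- 2 * pi * t * Q_real (of_rat2 \<alpha> + of_int2 v - y))))"
  unfolding theta_normalized_def theta_def infsum_cmult_left' [symmetric]
proof (rule infsum_cong)
  fix v
  have "ratv \<alpha> + intv v = of_real2 (of_rat2 \<alpha> + of_int2 v)"
    by (simp add: ratv_eq_of_real2 intv_eq_of_real2 of_real2_def)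
  then show "e (B (ratv \<beta>) (intv v)) * e (\<i> * of_real t * Q (ratv \<alpha> + intv v) + B (ratv \<alpha> + intv v) (z_at y l t))
               * of_real (exp (- 2 * pi * t * Q_real y))
             = theta_phase \<alpha> \<beta> l v * of_real (exp (- 2 * pi * t * Q_real (of_rat2 \<alpha> + of_int2 v - y)))"
    using e_gaussian_completing_square[of t "of_rat2 \<alpha> + of_int2 v" y l]
    by (simp add: theta_phase_def mult.assoc)
qed

lemma norm_theta_partial_le:
  assumes near: "\<And>v. v \<in> M \<Longrightarrow> m \<le> Q_real (of_rat2 \<alpha> + of_int2 v - y)" and "0 \<le> t"
  shows "norm (theta_partial \<alpha> \<beta> y l M t) \<le> card M * exp (- 2 * pi * t * m)"
  unfolding theta_partial_def
proof (rule sum_norm_bound)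
  fix v
  assume "v \<in> M"
  then have "exp (- 2 * pi * t * Q_real (of_rat2 \<alpha> + of_int2 v - y)) \<le> exp (- 2 * pi * t * m)"
    using near \<open>0 \<le> t\<close> by (simp add: mult_left_mono)
  then show "norm (theta_phase \<alpha> \<beta> l v * of_real (exp (- 2 * pi * t * Q_real (of_rat2 \<alpha> + of_int2 v - y))))
               \<le> exp (- 2 * pi * t * m)"
    by (simp add: norm_mult norm_theta_phase)
qed

lemma theta_normalized_minus_partial_le:
  assumes "finite M" and far: "\<And>v. v \<notin> M \<Longrightarrow> d \<le> Q_real (of_rat2 \<alpha> + of_int2 v - y)"
  obtains C where "0 \<le> C" "\<And>t. 1 \<le> t \<Longrightarrow>
    norm (theta_normalized \<alpha> \<beta> y l t - theta_partial \<alpha> \<beta> y l M t) \<le> C * exp (- 2 * pi * t * d)"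
proof -
  let ?q = "\<lambda>v. Q_real (of_rat2 \<alpha> + of_int2 v - y)"
  define C where "C = (\<Sum>\<^sub>\<infinity>v. exp (- 2 * pi * ?q v)) * exp (2 * pi * d)"
  have C: "0 \<le> C"
    unfolding C_def by (intro mult_nonneg_nonneg infsum_nonneg) auto
  have summable: "(\<lambda>v. exp (- 2 * pi * ?q v)) summable_on UNIV"
    using summable_on_exp_Q_real[of "of_rat2 \<alpha> - y"] by (simp add: algebra_simps)
  have bound: "norm (theta_normalized \<alpha> \<beta> y l t - theta_partial \<alpha> \<beta> y l M t) \<le> C * exp (- 2 * pi * t * d)"
    if "1 \<le> t" for t
  proof -
    have "norm (theta_normalized \<alpha> \<beta> y l t - theta_partial \<alpha> \<beta> y l M t)
            \<le> (\<Sum>\<^sub>\<infinity>v. exp (- 2 * pi * ?q v)) * exp (- 2 * pi * (t - 1) * d)"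
      unfolding theta_normalized_eq_infsum theta_partial_def
      by (rule gaussian_sum_tail_le[OF _ _ summable \<open>finite M\<close>])
        (use norm_theta_phase Q_real_nonneg far that in auto)
    also have "\<dots> = C * exp (- 2 * pi * t * d)"
      by (simp add: C_def mult.assoc algebra_simps flip: exp_add)
    finally show ?thesis .
  qed
  show ?thesis
    by (rule that[OF C bound])
qed

lemma theta_normalized_power_approx:
  assumes M: "finite M"
    and near: "\<And>v. v \<in> M \<Longrightarrow> m \<le> Q_real (of_rat2 \<alpha> + of_int2 v - y)"
    and far: "\<And>v. v \<notin> M \<Longrightarrow> d \<le> Q_real (of_rat2 \<alpha> + of_int2 v - y)"
    and "m \<le> d"
  obtains K where "0 \<le> K"
    "\<And>t. 1 \<le> t \<Longrightarrow> norm (theta_normalized \<alpha> \<beta> y l t ^ n - theta_partial \<alpha> \<beta> y l M t ^ n)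
                       \<le> K * exp (- 2 * pi * t * (real (n - 1) * m + d))"
proof -
  obtain C where C: "0 \<le> C" and tail: "\<And>t. 1 \<le> t \<Longrightarrow>
      norm (theta_normalized \<alpha> \<beta> y l t - theta_partial \<alpha> \<beta> y l M t) \<le> C * exp (- 2 * pi * t * d)"
    using theta_normalized_minus_partial_le[OF M far, where \<beta> = \<beta> and l = l] by blast
  have bound: "norm (theta_normalized \<alpha> \<beta> y l t ^ n - theta_partial \<alpha> \<beta> y l M t ^ n)
                 \<le> n * (C + card M) ^ (n - 1) * C * exp (- 2 * pi * t * (real (n - 1) * m + d))"
    if t: "1 \<le> t" for t
  proof -
    define Th where "Th = theta_normalized \<alpha> \<beta> y l t"
    define P where "P = theta_partial \<alpha> \<beta> y l M t"
    define E where "E = (C + card M) * exp (- 2 * pi * t * m)"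
    have P: "norm P \<le> card M * exp (- 2 * pi * t * m)"
      unfolding P_def using norm_theta_partial_le[OF near] t by simp
    then have PE: "norm P \<le> E"
      using C by (simp add: E_def distrib_right add_increasing)
    have "exp (- 2 * pi * t * d) \<le> exp (- 2 * pi * t * m)"
      using \<open>m \<le> d\<close> t by (simp add: mult_left_mono)
    then have "norm (Th - P) \<le> C * exp (- 2 * pi * t * m)"
      using tail[OF t] C unfolding Th_def P_def by (meson mult_left_mono order_trans)
    then have ThE: "norm Th \<le> E"
      using norm_triangle_sub[of Th P] P by (simp add: E_def distrib_right)
    have "norm (Th ^ n - P ^ n) \<le> n * E ^ (n - 1) * norm (Th - P)"
      by (rule norm_power_diff_le[OF ThE PE])
    also have "\<dots> \<le> n * E ^ (n - 1) * (C * exp (- 2 * pi * t * d))"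
      unfolding Th_def P_def by (intro mult_left_mono tail t) (simp add: E_def C)
    also have "\<dots> = n * (C + card M) ^ (n - 1) * C * (exp (- 2 * pi * t * m) ^ (n - 1) * exp (- 2 * pi * t * d))"
      by (simp add: E_def power_mult_distrib mult_ac)
    also have "exp (- 2 * pi * t * m) ^ (n - 1) * exp (- 2 * pi * t * d)
                 = exp (- 2 * pi * t * (real (n - 1) * m + d))"
      by (simp add: algebra_simps flip: exp_of_nat_mult exp_add)
    finally show ?thesis
      unfolding Th_def P_def .
  qed
  show ?thesis
    by (rule that[OF _ bound]) (use C in simp_all)
qed

lemma zero_if_exp_dominated:
  fixes X :: "'a::real_normed_vector"
  assumes bound: "\<And>t. 1 \<le> t \<Longrightarrow> norm X * exp (- 2 * pi * t * a) \<le> K * exp (- 2 * pi * t * b)"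
    and "a < b"
  shows "X = 0"
proof -
  define r where "r = exp (- 2 * pi * (b - a))"
  have "norm X \<le> K * r ^ n" if "1 \<le> n" for n
  proof -
    have "norm X * exp (- 2 * pi * n * a) \<le> K * exp (- 2 * pi * n * b)"
      using bound[of n] that by simp
    then have "norm X \<le> K * exp (- 2 * pi * n * b) / exp (- 2 * pi * n * a)"
      by (simp add: field_simps)
    also have "\<dots> = K * exp (real n * (- 2 * pi * (b - a)))"
      unfolding times_divide_eq_right [symmetric] exp_diff [symmetric] by (simp add: algebra_simps)
    also have "\<dots> = K * r ^ n"
      unfolding r_def exp_of_nat_mult ..
    finally show ?thesis .
  qed
  moreover have "(\<lambda>n. K * r ^ n) \<longlonglongrightarrow> 0"
    using \<open>a < b\<close> by (intro tendsto_mult_right_zero LIMSEQ_power_zero) (simp add: r_def)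
  ultimately have "norm X \<le> 0"
    by (intro LIMSEQ_le_const[where X = "\<lambda>n. K * r ^ n"]) auto
  then show ?thesis
    by simp
qed

lemma theta_normalized_relation:
  fixes c :: "'i \<Rightarrow> 'j \<Rightarrow> complex"
  assumes rel: "\<And>\<tau> z. Im \<tau> > 0 \<Longrightarrow> (\<Sum>i\<in>I. \<Sum>j\<in>J. c i j * theta (\<alpha> i) (\<beta> j) \<tau> z ^ n) = 0"
    and "0 < t"
  shows "(\<Sum>i\<in>I. \<Sum>j\<in>J. c i j * theta_normalized (\<alpha> i) (\<beta> j) y l t ^ n) = 0"
proof -
  have "(\<Sum>i\<in>I. \<Sum>j\<in>J. c i j * theta_normalized (\<alpha> i) (\<beta> j) y l t ^ n)
          = (\<Sum>i\<in>I. \<Sum>j\<in>J. c i j * theta (\<alpha> i) (\<beta> j) (\<i> * of_real t) (z_at y l t) ^ n)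
            * of_real (exp (- 2 * pi * t * Q_real y)) ^ n"
    by (simp add: theta_normalized_def sum_distrib_right power_mult_distrib mult.assoc)
  then show ?thesis
    using rel[of "\<i> * of_real t"] \<open>0 < t\<close> by simp
qed

lemma theta_normalized_powers_approx_uniform:
  assumes M: "\<And>i. i \<in> I \<Longrightarrow> finite (M i)"
    and near: "\<And>i v. i \<in> I \<Longrightarrow> v \<in> M i \<Longrightarrow> m i \<le> Q_real (of_rat2 (\<alpha> i) + of_int2 v - y)"
    and far: "\<And>i v. i \<in> I \<Longrightarrow> v \<notin> M i \<Longrightarrow> d i \<le> Q_real (of_rat2 (\<alpha> i) + of_int2 v - y)"
    and md: "\<And>i. i \<in> I \<Longrightarrow> m i \<le> d i"
    and gap: "\<And>i. i \<in> I \<Longrightarrow> b \<le> real (n - 1) * m i + d i"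
  shows "\<exists>K. \<forall>i\<in>I. \<forall>j. \<forall>t\<ge>1.
    norm (theta_normalized (\<alpha> i) (\<beta> j) y l t ^ n - theta_partial (\<alpha> i) (\<beta> j) y l (M i) t ^ n)
      \<le> K i j * exp (- 2 * pi * t * b)"
proof -
  let ?Th = "\<lambda>i j t. theta_normalized (\<alpha> i) (\<beta> j) y l t ^ n"
  let ?P = "\<lambda>i j t. theta_partial (\<alpha> i) (\<beta> j) y l (M i) t ^ n"
  have "\<forall>i\<in>I. \<exists>k. \<forall>j. \<forall>t\<ge>1. norm (?Th i j t - ?P i j t) \<le> k j * exp (- 2 * pi * t * b)"
  proof (intro ballI choice allI)
    fix i j
    assume i: "i \<in> I"
    obtain K where "0 \<le> K" and K: "\<And>t. 1 \<le> t \<Longrightarrow>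
        norm (?Th i j t - ?P i j t) \<le> K * exp (- 2 * pi * t * (real (n - 1) * m i + d i))"
      using theta_normalized_power_approx[OF M[OF i] near[OF i] far[OF i] md[OF i],
            where \<beta> = "\<beta> j" and l = l and n = n] by blast
    show "\<exists>K. \<forall>t\<ge>1. norm (?Th i j t - ?P i j t) \<le> K * exp (- 2 * pi * t * b)"
    proof (intro exI allI impI)
      fix t :: real
      assume t: "1 \<le> t"
      have "exp (- 2 * pi * t * (real (n - 1) * m i + d i)) \<le> exp (- 2 * pi * t * b)"
        using gap[OF i] t by (simp add: mult_left_mono)
      then show "norm (?Th i j t - ?P i j t) \<le> K * exp (- 2 * pi * t * b)"
        using K[OF t] \<open>0 \<le> K\<close> by (meson mult_left_mono order_trans)
    qed
  qed
  then show ?thesis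
    by (rule bchoice)
qed

lemma theta_relation_leading_term_eq_0:
  fixes c :: "'i \<Rightarrow> 'j \<Rightarrow> complex" and X :: complex
  assumes rel: "\<And>\<tau> z. Im \<tau> > 0 \<Longrightarrow> (\<Sum>i\<in>I. \<Sum>j\<in>J. c i j * theta (\<alpha> i) (\<beta> j) \<tau> z ^ n) = 0"
    and M: "\<And>i. i \<in> I \<Longrightarrow> finite (M i)"
    and near: "\<And>i v. i \<in> I \<Longrightarrow> v \<in> M i \<Longrightarrow> m i \<le> Q_real (of_rat2 (\<alpha> i) + of_int2 v - y)"
    and far: "\<And>i v. i \<in> I \<Longrightarrow> v \<notin> M i \<Longrightarrow> d i \<le> Q_real (of_rat2 (\<alpha> i) + of_int2 v - y)"
    and md: "\<And>i. i \<in> I \<Longrightarrow> m i \<le> d i"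
    and gap: "\<And>i. i \<in> I \<Longrightarrow> b \<le> real (n - 1) * m i + d i" "a < b"
    and lead: "\<And>t. 1 \<le> t \<Longrightarrow>
      (\<Sum>i\<in>I. \<Sum>j\<in>J. c i j * theta_partial (\<alpha> i) (\<beta> j) y l (M i) t ^ n) = exp (- 2 * pi * t * a) * X"
  shows "X = 0"
proof -
  let ?Th = "\<lambda>i j t. theta_normalized (\<alpha> i) (\<beta> j) y l t ^ n"
  let ?P = "\<lambda>i j t. theta_partial (\<alpha> i) (\<beta> j) y l (M i) t ^ n"
  from theta_normalized_powers_approx_uniform[OF M near far md gap(1), where \<beta> = \<beta> and l = l]
  obtain K where K: "\<forall>i\<in>I. \<forall>j. \<forall>t\<ge>1. norm (?Th i j t - ?P i j t) \<le> K i j * exp (- 2 * pi * t * b)" ..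
  show ?thesis
  proof (rule zero_if_exp_dominated[OF _ gap(2)])
    fix t :: real
    assume t: "1 \<le> t"
    have "norm X * exp (- 2 * pi * t * a) = norm (of_real (exp (- 2 * pi * t * a)) * X)"
      by (simp add: norm_mult)
    also have "of_real (exp (- 2 * pi * t * a)) * X
                 = (\<Sum>i\<in>I. \<Sum>j\<in>J. c i j * ?P i j t) - (\<Sum>i\<in>I. \<Sum>j\<in>J. c i j * ?Th i j t)"
      using lead[OF t] theta_normalized_relation[OF rel, of t] t by simp
    also have "\<dots> = (\<Sum>i\<in>I. \<Sum>j\<in>J. c i j * (?P i j t - ?Th i j t))"
      by (simp add: sum_subtractf algebra_simps)
    also have "norm \<dots> \<le> (\<Sum>i\<in>I. \<Sum>j\<in>J. norm (c i j) * (K i j * exp (- 2 * pi * t * b)))"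
    proof (intro sum_norm_le)
      fix i j
      assume "i \<in> I"
      show "norm (c i j * (?P i j t - ?Th i j t)) \<le> norm (c i j) * (K i j * exp (- 2 * pi * t * b))"
        unfolding norm_mult norm_minus_commute[of "?P i j t"]
        using K[rule_format, OF \<open>i \<in> I\<close> t] by (rule mult_left_mono) simp
    qed
    also have "\<dots> = (\<Sum>i\<in>I. \<Sum>j\<in>J. norm (c i j) * K i j) * exp (- 2 * pi * t * b)"
      by (simp add: sum_distrib_right mult.assoc)
    finally show "norm X * exp (- 2 * pi * t * a)
                    \<le> (\<Sum>i\<in>I. \<Sum>j\<in>J. norm (c i j) * K i j) * exp (- 2 * pi * t * b)" .
  qed
qed

section \<open>Lattice geometry of the characteristics\<close>

lemma less_five_iff: "k < (5::nat) \<longleftrightarrow> k = 0 \<or> k = 1 \<or> k = 2 \<or> k = 3 \<or> k = 4"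
  by auto

definition alpha_snd_num :: "nat \<Rightarrow> int" where
  "alpha_snd_num k = [0, 3, 1, 4, 2] ! k"

lemma of_rat2_alphas: "k < 5 \<Longrightarrow> of_rat2 (alphas k) = (real k / 5, of_int (alpha_snd_num k) / 5)"
  unfolding less_five_iff by (auto simp: of_rat2_def alphas_def alpha_snd_num_def of_rat_divide)

lemma alpha_snd_num_diff_mod_5_cases:
  assumes "k < 5" "k' < 5" "k \<noteq> k'"
  shows "(alpha_snd_num k' - alpha_snd_num k) mod 5 \<in> {1, 4} \<or> (alpha_snd_num k' - alpha_snd_num k) mod 5 \<in> {2, 3}"
  using assms unfolding less_five_iff by (auto simp: alpha_snd_num_def)

(* The integers (2 p1 + p2, 5 p2) for p = \<alpha>_k' - \<alpha>_k + v, in which 20 Q p = 5 x^2 + 3 w^2;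
   the division is exact because alpha_snd_num k = 3 k (mod 5). *)
definition coset_coords :: "nat \<Rightarrow> nat \<Rightarrow> int \<times> int \<Rightarrow> int \<times> int" where
  "coset_coords k k' v =
     ((2 * (int k' - int k) + (alpha_snd_num k' - alpha_snd_num k)) div 5 + 2 * fst v + snd v,
      alpha_snd_num k' - alpha_snd_num k + 5 * snd v)"

definition Q_shift :: "nat \<Rightarrow> nat \<Rightarrow> real \<Rightarrow> int \<times> int \<Rightarrow> real" where
  "Q_shift k k' c v = Q_real (of_rat2 (alphas k') + of_int2 v - (of_rat2 (alphas k) + (c, 0)))"

lemma Q_shift_same: "Q_shift k k c v = Q_real (of_int2 v - (c, 0))"
  by (simp add: Q_shift_def)

lemma Q_shift_coset_coords:
  assumes "k < 5" "k' < 5"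
  shows "20 * Q_shift k k' c v
           = 5 * (of_int (fst (coset_coords k k' v)) - 2 * c) ^ 2 + 3 * of_int (snd (coset_coords k k' v)) ^ 2"
proof -
  define q where "q = (2 * (int k' - int k) + (alpha_snd_num k' - alpha_snd_num k)) div 5"
  have "5 * q = 2 * (int k' - int k) + (alpha_snd_num k' - alpha_snd_num k)"
    using assms unfolding q_def less_five_iff by (auto simp: alpha_snd_num_def)
  then have "real_of_int (5 * q) = real_of_int (2 * (int k' - int k) + (alpha_snd_num k' - alpha_snd_num k))"
    by (simp only:)
  then have q: "real_of_int q = (2 * (real k' - real k) + (of_int (alpha_snd_num k') - of_int (alpha_snd_num k))) / 5"
    by simp
  let ?p = "of_rat2 (alphas k') + of_int2 v - (of_rat2 (alphas k) + (c, 0))"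
  have p1: "2 * fst ?p + snd ?p = of_int (fst (coset_coords k k' v)) - 2 * c"
    using assms unfolding coset_coords_def q_def [symmetric]
    by (simp add: of_rat2_alphas of_int2_def q field_simps)
  have p2: "snd ?p = of_int (snd (coset_coords k k' v)) / 5"
    using assms by (simp add: of_rat2_alphas of_int2_def coset_coords_def field_simps)
  show ?thesis
    unfolding Q_shift_def twenty_Q_real p1 unfolding p2 by (simp add: power_divide)
qed

lemma coset_coords_parity:
  assumes "k < 5" "k' < 5"
  shows "even (fst (coset_coords k k' v) - snd (coset_coords k k' v))"
proof -
  have "even ((2 * (int k' - int k) + (alpha_snd_num k' - alpha_snd_num k)) div 5
                - (alpha_snd_num k' - alpha_snd_num k))"
    using assms unfolding less_five_iff by (auto simp: alpha_snd_num_def)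
  moreover have "fst (coset_coords k k' v) - snd (coset_coords k k' v)
      = (2 * (int k' - int k) + (alpha_snd_num k' - alpha_snd_num k)) div 5
          - (alpha_snd_num k' - alpha_snd_num k) + 2 * (fst v - 2 * snd v)"
    by (simp add: coset_coords_def)
  ultimately show ?thesis
    by simp
qed

lemma coset_coords_mod_5:
  "snd (coset_coords k k' v) mod 5 = (alpha_snd_num k' - alpha_snd_num k) mod 5"
  by (simp add: coset_coords_def)

lemma int_form_ge_8:
  fixes x w :: int
  assumes "even (x - w)" "w mod 5 \<noteq> 0"
  shows "8 \<le> 5 * x ^ 2 + 3 * w ^ 2"
proof (cases "odd w")
  case True
  then have "1 \<le> \<bar>x\<bar>" "1 \<le> \<bar>w\<bar>"
    using assms(1) by presburger+
  then have "1 \<le> x ^ 2" "1 \<le> w ^ 2"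
    using abs_le_square_iff[of 1 x] abs_le_square_iff[of 1 w] by simp_all
  then show ?thesis
    by linarith
next
  case False
  then have "2 \<le> \<bar>w\<bar>"
    using assms(2) by presburger
  then have "4 \<le> w ^ 2"
    using abs_le_square_iff[of 2 w] by simp
  then show ?thesis
    using zero_le_power2[of x] by linarith
qed

lemma int_form_shift_ge_23:
  fixes x w :: int
  assumes "even (x - w)" "w mod 5 \<in> {1, 4}" "(x, \<bar>w\<bar>) \<noteq> (1, 1)"
  shows "23 \<le> 5 * (x - 1) ^ 2 + 3 * w ^ 2"
proof (cases "\<bar>w\<bar> = 1")
  case True
  moreover have "x \<noteq> 1"
    using True assms(3) by auto
  ultimately have "2 \<le> \<bar>x - 1\<bar>"
    using assms(1) by presburger
  then have "4 \<le> (x - 1) ^ 2"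
    using abs_le_square_iff[of 2 "x - 1"] by simp
  moreover have "w ^ 2 = 1"
    using True abs_square_eq_1 by blast
  ultimately show ?thesis
    by linarith
next
  case False
  moreover have "w mod 5 = 1 \<or> w mod 5 = 4"
    using assms(2) by simp
  ultimately have "4 \<le> \<bar>w\<bar>"
    by presburger
  then have "16 \<le> w ^ 2"
    using abs_le_square_iff[of 4 w] by simp
  then show ?thesis
    using zero_le_power2[of "x - 1"] by linarith
qed

lemma int_form_shift_ge_17:
  fixes x w :: int
  assumes "even (x - w)" "w mod 5 \<in> {2, 3}"
  shows "17 \<le> 5 * (x - 1) ^ 2 + 3 * w ^ 2"
proof (cases "\<bar>w\<bar> = 2")
  case True
  then have "1 \<le> \<bar>x - 1\<bar>"
    using assms(1) by presburger
  then have "1 \<le> (x - 1) ^ 2"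
    using abs_le_square_iff[of 1 "x - 1"] by simp
  moreover have "w ^ 2 = 4"
    using True power2_abs[of w] by simp
  ultimately show ?thesis
    by linarith
next
  case False
  moreover have "w mod 5 = 2 \<or> w mod 5 = 3"
    using assms(2) by simp
  ultimately have "3 \<le> \<bar>w\<bar>"
    by presburger
  then have "9 \<le> w ^ 2"
    using abs_le_square_iff[of 3 w] by simp
  then show ?thesis
    using zero_le_power2[of "x - 1"] by linarith
qed

lemma Q_shift_ge_2_5:
  assumes "k < 5" "k' < 5" "k \<noteq> k'"
  shows "2 / 5 \<le> Q_shift k k' 0 v"
proof -
  let ?x = "fst (coset_coords k k' v)" and ?w = "snd (coset_coords k k' v)"
  have "?w mod 5 \<noteq> 0"
    using alpha_snd_num_diff_mod_5_cases[OF assms] by (auto simp: coset_coords_mod_5)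
  then have "8 \<le> 5 * ?x ^ 2 + 3 * ?w ^ 2"
    using int_form_ge_8 coset_coords_parity[OF assms(1,2)] by blast
  then have "8 \<le> real_of_int (5 * ?x ^ 2 + 3 * ?w ^ 2)"
    by (simp only: of_int_numeral_le_iff)
  then show ?thesis
    using Q_shift_coset_coords[OF assms(1,2), of 0 v] by simp
qed

lemma Q_shift_half_ge_3_20:
  assumes "k < 5" "k' < 5" "k \<noteq> k'"
  shows "3 / 20 \<le> Q_shift k k' (1 / 2) v"
proof -
  let ?x = "fst (coset_coords k k' v)" and ?w = "snd (coset_coords k k' v)"
  have "?w \<noteq> 0"
    using alpha_snd_num_diff_mod_5_cases[OF assms] coset_coords_mod_5[of k k' v] by auto
  then have "1 \<le> \<bar>?w\<bar>"
    by presburger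
  then have "1 \<le> ?w ^ 2"
    using abs_le_square_iff[of 1 ?w] by simp
  then have "1 \<le> real_of_int ?w ^ 2"
    by (metis of_int_1 of_int_le_iff of_int_power)
  moreover have "20 * Q_shift k k' (1 / 2) v = 5 * (real_of_int ?x - 1) ^ 2 + 3 * real_of_int ?w ^ 2"
    using Q_shift_coset_coords[OF assms(1,2), of "1 / 2" v] by simp
  ultimately show ?thesis
    using zero_le_power2[of "real_of_int ?x - 1"] by linarith
qed

lemma Q_shift_half_ge_17_20:
  assumes "k < 5" "k' < 5" "(alpha_snd_num k' - alpha_snd_num k) mod 5 \<in> {2, 3}"
  shows "17 / 20 \<le> Q_shift k k' (1 / 2) v"
proof -
  let ?x = "fst (coset_coords k k' v)" and ?w = "snd (coset_coords k k' v)"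
  have "17 \<le> 5 * (?x - 1) ^ 2 + 3 * ?w ^ 2"
    using assms(3) by (intro int_form_shift_ge_17 coset_coords_parity[OF assms(1,2)])
      (simp add: coset_coords_mod_5)
  then have "17 \<le> real_of_int (5 * (?x - 1) ^ 2 + 3 * ?w ^ 2)"
    by (simp only: of_int_numeral_le_iff)
  then show ?thesis
    using Q_shift_coset_coords[OF assms(1,2), of "1 / 2" v] by simp
qed

lemma int_form_shift_lt_23_unique:
  fixes D W :: int
  assumes "even (D - W)" and W: "W mod 5 = 1 \<or> W mod 5 = 4"
  obtains v0 where "5 * (D + 2 * fst v0 + snd v0 - 1) ^ 2 + 3 * (W + 5 * snd v0) ^ 2 = 3"
    "\<And>v. 5 * (D + 2 * fst v + snd v - 1) ^ 2 + 3 * (W + 5 * snd v) ^ 2 < 23 \<Longrightarrow> v = v0"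
proof -
  have "\<exists>v2. W + 5 * v2 = 1 \<or> W + 5 * v2 = - 1"
    using W by presburger
  then obtain v2 where v2: "W + 5 * v2 = 1 \<or> W + 5 * v2 = - 1"
    by blast
  have "\<exists>v1. D + 2 * v1 + v2 = 1"
    using \<open>even (D - W)\<close> v2 by presburger
  then obtain v1 where v1: "D + 2 * v1 + v2 = 1"
    by blast
  have "(W + 5 * v2) ^ 2 = 1"
    using v2 by auto
  then have "5 * (D + 2 * fst (v1, v2) + snd (v1, v2) - 1) ^ 2 + 3 * (W + 5 * snd (v1, v2)) ^ 2 = 3"
    using v1 by simp
  moreover have "v = (v1, v2)"
    if "5 * (D + 2 * fst v + snd v - 1) ^ 2 + 3 * (W + 5 * snd v) ^ 2 < 23" for v
  proof -
    have "even ((D + 2 * fst v + snd v) - (W + 5 * snd v))"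
      using \<open>even (D - W)\<close> by presburger
    moreover have "(W + 5 * snd v) mod 5 \<in> {1, 4}"
      using W by auto
    ultimately have "(D + 2 * fst v + snd v, \<bar>W + 5 * snd v\<bar>) = (1, 1)"
      using that int_form_shift_ge_23[of "D + 2 * fst v + snd v" "W + 5 * snd v"] by (meson not_le)
    then have "D + 2 * fst v + snd v = 1" "W + 5 * snd v = 1 \<or> W + 5 * snd v = - 1"
      by (auto split: abs_split)
    moreover from this(2) have "snd v = v2"
      using v2 by presburger
    ultimately show "v = (v1, v2)"
      using v1 by (simp add: prod_eq_iff)
  qed
  ultimately show ?thesis
    by (rule that)
qed

lemma Q_shift_half_unique_small:
  assumes "k < 5" "k' < 5" "(alpha_snd_num k' - alpha_snd_num k) mod 5 \<in> {1, 4}"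
  shows "\<exists>v0. {v. Q_shift k k' (1 / 2) v < 23 / 20} = {v0}"
proof -
  define D where "D = fst (coset_coords k k' (0, 0))"
  define W where "W = snd (coset_coords k k' (0, 0))"
  define X where "X v = 5 * (D + 2 * fst v + snd v - 1) ^ 2 + 3 * (W + 5 * snd v) ^ 2" for v
  have DW: "even (D - W)" "W mod 5 = 1 \<or> W mod 5 = 4"
    using coset_coords_parity[OF assms(1,2), of "(0, 0)"] coset_coords_mod_5[of k k' "(0, 0)"] assms(3)
    by (simp_all add: D_def W_def)
  obtain v0 where v0: "X v0 = 3" and unique: "\<And>v. X v < 23 \<Longrightarrow> v = v0"
    using int_form_shift_lt_23_unique[OF DW] unfolding X_def by blast
  have X: "20 * Q_shift k k' (1 / 2) v = real_of_int (X v)" for v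
    using Q_shift_coset_coords[OF assms(1,2), of "1 / 2" v]
    by (simp add: X_def D_def W_def coset_coords_def)
  have "Q_shift k k' (1 / 2) v < 23 / 20 \<longleftrightarrow> v = v0" for v
  proof
    assume "Q_shift k k' (1 / 2) v < 23 / 20"
    then have "real_of_int (X v) < 23"
      using X[of v] by linarith
    then show "v = v0"
      by (intro unique) simp
  qed (use X[of v0] v0 in simp)
  then show ?thesis
    by auto
qed

section \<open>Linear independence\<close>

lemma theta_relation_row_sum_eq_0:
  fixes c :: "nat \<Rightarrow> nat \<Rightarrow> complex"
  assumes rel: "\<And>\<tau> z. Im \<tau> > 0 \<Longrightarrow> (\<Sum>i<5. \<Sum>j<5. c i j * theta (alphas i) (betas j) \<tau> z ^ 5) = 0"
    and k: "k < 5"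
  shows "(\<Sum>j<5. c k j) = 0"
proof -
  define y where "y = of_rat2 (alphas k) + (0, 0)"
  define m where "m i = (if i = k then 0 else 2 / 5 :: real)" for i
  define d where "d i = (if i = k then 1 else 2 / 5 :: real)" for i
  define M where "M i = {v. Q_shift k i 0 v < d i}" for i
  have Q_eq: "Q_real (of_rat2 (alphas i) + of_int2 v - y) = Q_shift k i 0 v" for i v
    by (simp add: Q_shift_def y_def)
  have M_k: "M k = {(0, 0)}"
    by (simp add: M_def d_def Q_shift_same Q_real_of_int2_lt_1_iff flip: zero_prod_def)
  have M_other: "M i = {}" if "i < 5" "i \<noteq> k" for i
    using Q_shift_ge_2_5[OF k that(1) that(2)[symmetric]] that(2) by (auto simp: M_def d_def not_less)
  have partial: "theta_partial (alphas i) (betas j) y (0, 0) (M i) t = (if i = k then 1 else 0)"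
    if "i < 5" for i j t
  proof -
    have "Q_shift k k 0 (0, 0) = 0"
      by (simp add: Q_shift_same of_int2_def Q_real_def)
    then show ?thesis
      using M_other[OF that] by (simp add: M_k theta_partial_def theta_phase_origin Q_eq B_real_def e_def)
  qed
  show ?thesis
  proof (rule theta_relation_leading_term_eq_0[OF rel, where M = M and m = m and d = d
        and y = y and l = "(0, 0)" and a = 0 and b = 1])
    show "finite (M i)" if "i \<in> {..<5}" for i
      using M_k M_other that by (cases "i = k") auto
    show "m i \<le> Q_real (of_rat2 (alphas i) + of_int2 v - y)" if "i \<in> {..<5}" for i v
      using Q_real_nonneg Q_shift_ge_2_5[OF k] that by (auto simp: Q_eq m_def Q_shift_def)
    show "d i \<le> Q_real (of_rat2 (alphas i) + of_int2 v - y)" if "v \<notin> M i" for i v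
      using that by (simp add: Q_eq M_def)
    show "m i \<le> d i" "1 \<le> real (5 - 1) * m i + d i" for i
      by (simp_all add: m_def d_def)
    fix t :: real
    have "(\<Sum>i<5. \<Sum>j<5. c i j * theta_partial (alphas i) (betas j) y (0, 0) (M i) t ^ 5)
            = (\<Sum>i<5. if i = k then \<Sum>j<5. c k j else 0)"
      by (rule sum.cong) (simp_all add: partial)
    also have "\<dots> = (\<Sum>j<5. c k j)"
      using k by simp
    finally show "(\<Sum>i<5. \<Sum>j<5. c i j * theta_partial (alphas i) (betas j) y (0, 0) (M i) t ^ 5)
                    = exp (- 2 * pi * t * 0) * (\<Sum>j<5. c k j)"
      by simp
  qed simp_all
qed

lemma theta_relation_half_shift_leading_term:
  fixes c :: "nat \<Rightarrow> nat \<Rightarrow> complex"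
  assumes rel: "\<And>\<tau> z. Im \<tau> > 0 \<Longrightarrow> (\<Sum>i<5. \<Sum>j<5. c i j * theta (alphas i) (betas j) \<tau> z ^ 5) = 0"
    and k: "k < 5" and M_k: "M k = {(0, 0), (1, 0)}"
    and M_other: "\<And>i. i < 5 \<Longrightarrow> i \<noteq> k \<Longrightarrow> M i = {} \<or> (\<exists>v. M i = {v})"
  shows "(\<Sum>i<5. \<Sum>j<5. c i j * theta_partial (alphas i) (betas j) (of_rat2 (alphas k) + (1 / 2, 0)) (x / 2, 0) (M i) t ^ 5)
           = of_real (exp (- 2 * pi * t * (5 / 4)))
             * (e (of_real (B_real (of_rat2 (alphas k)) (x / 2, 0))) ^ 5
                * (\<Sum>j<5. c k j * (1 + e (2 / 5) ^ j * e (of_real x)) ^ 5))"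
    (is "(\<Sum>i<5. ?row i) = ?lead")
proof -
  let ?y = "of_rat2 (alphas k) + (1 / 2, 0)"
  have exp_power: "of_real (exp (- 2 * pi * t * (1 / 4))) ^ 5 = (of_real (exp (- 2 * pi * t * (5 / 4))) :: complex)"
    by (simp add: algebra_simps flip: of_real_power exp_of_nat_mult)
  have "?row k = ?lead"
    unfolding M_k theta_partial_half_shift power_mult_distrib exp_power by (simp add: sum_distrib_left mult_ac)
  (* These rows decay more slowly than the k-th one, but the fifth power removes the phase
     e (B (\<beta>_j, v)), so their leading term does not depend on j and cancels. *)
  moreover have "?row i = 0" if i: "i < 5" "i \<noteq> k" for i
  proof (cases "M i = {}")
    case True
    then show ?thesis
      by (simp add: theta_partial_def)
  next
    case False
    then obtain v where "M i = {v}"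
      using M_other[OF i] by blast
    then have "?row i = (\<Sum>j<5. c i j) * (e (of_real (B_real (of_rat2 (alphas i) + of_int2 v) (x / 2, 0)))
                 * of_real (exp (- 2 * pi * t * Q_real (of_rat2 (alphas i) + of_int2 v - ?y)))) ^ 5"
      by (simp add: theta_partial_singleton_betas_power sum_distrib_right)
    then show ?thesis
      using theta_relation_row_sum_eq_0[OF rel i(1)] by simp
  qed
  ultimately have "(\<Sum>i<5. ?row i) = (\<Sum>i<5. if i = k then ?lead else 0)"
    by (intro sum.cong) auto
  then show ?thesis
    using k by simp
qed

lemma theta_relation_binomial_row_eq_0:
  fixes c :: "nat \<Rightarrow> nat \<Rightarrow> complex"
  assumes rel: "\<And>\<tau> z. Im \<tau> > 0 \<Longrightarrow> (\<Sum>i<5. \<Sum>j<5. c i j * theta (alphas i) (betas j) \<tau> z ^ 5) = 0"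
    and k: "k < 5"
  shows "(\<Sum>j<5. c k j * (1 + e (2 / 5) ^ j * e (of_real x)) ^ 5) = 0"
proof -
  define good where "good i \<longleftrightarrow> (alpha_snd_num i - alpha_snd_num k) mod 5 \<in> {1, 4}" for i
  (* The k-th row decays like exp (- 2 pi t * 5 * 1/4); every error term decays at least like
     exp (- 2 pi t (4 m i + d i)) with 4 m i + d i \<ge> 7/4. *)
  define m where "m i = (if i = k then 1 / 4 else if good i then 3 / 20 else 17 / 20 :: real)" for i
  define d where "d i = (if i = k then 9 / 4 else if good i then 23 / 20 else 17 / 20 :: real)" for i
  define M where "M i = {v. Q_shift k i (1 / 2) v < d i}" for i
  define y where "y = of_rat2 (alphas k) + (1 / 2, 0)"
  have Q_eq: "Q_real (of_rat2 (alphas i) + of_int2 v - y) = Q_shift k i (1 / 2) v" for i v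
    by (simp add: Q_shift_def y_def)
  have bad: "(alpha_snd_num i - alpha_snd_num k) mod 5 \<in> {2, 3}" if "i < 5" "i \<noteq> k" "\<not> good i" for i
    using alpha_snd_num_diff_mod_5_cases[OF k that(1) that(2)[symmetric]] that(3) by (auto simp: good_def)
  have "d k = 9 / 4"
    by (simp add: d_def)
  then have M_k: "M k = {(0, 0), (1, 0)}"
    unfolding M_def Q_shift_same by (simp only: Q_real_of_int2_half_shift_lt_iff Collect_mem_eq)
  have M_other: "M i = {} \<or> (\<exists>v. M i = {v})" if "i < 5" "i \<noteq> k" for i
    using Q_shift_half_unique_small[OF k that(1)] Q_shift_half_ge_17_20[OF k that(1) bad[OF that]] that
    by (cases "good i") (auto simp: M_def d_def good_def not_less)
  have near: "m i \<le> Q_shift k i (1 / 2) v" if "i < 5" for i v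
  proof (cases "i = k")
    case True
    then show ?thesis
      using Q_real_of_int2_half_shift_ge by (simp add: m_def Q_shift_same)
  next
    case False
    then show ?thesis
      using Q_shift_half_ge_3_20[OF k that False[symmetric]] Q_shift_half_ge_17_20[OF k that bad[OF that False]]
      by (auto simp: m_def)
  qed
  have "e (of_real (B_real (of_rat2 (alphas k)) (x / 2, 0))) ^ 5 * (\<Sum>j<5. c k j * (1 + e (2 / 5) ^ j * e (of_real x)) ^ 5) = 0"
  proof (rule theta_relation_leading_term_eq_0[OF rel, where M = M and m = m and d = d
        and y = y and l = "(x / 2, 0)" and a = "5 / 4" and b = "7 / 4"])
    show "finite (M i)" if "i \<in> {..<5}" for i
      using M_k M_other[of i] that by (cases "i = k") auto
    show "m i \<le> Q_real (of_rat2 (alphas i) + of_int2 v - y)" if "i \<in> {..<5}" for i v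
      using near that by (simp add: Q_eq)
    show "d i \<le> Q_real (of_rat2 (alphas i) + of_int2 v - y)" if "v \<notin> M i" for i v
      using that by (simp add: Q_eq M_def)
    show "m i \<le> d i" "7 / 4 \<le> real (5 - 1) * m i + d i" for i
      by (simp_all add: m_def d_def)
  qed (use theta_relation_half_shift_leading_term[where M = M and x = x, OF rel k M_k M_other] in \<open>simp_all add: y_def\<close>)
  then show ?thesis
    by (simp add: e_def)
qed

lemma sum_powers_root_of_unity:
  fixes w :: "'a::field"
  assumes "w ^ n = 1" "w \<noteq> 1"
  shows "(\<Sum>r<n. w ^ r) = 0"
  using geometric_sum[OF assms(2), of n] assms(1) by simp

lemma root_of_unity_powers_inj:
  fixes \<zeta> :: "'a::field"
  assumes \<zeta>: "\<zeta> ^ n = 1" and primitive: "\<And>r. 0 < r \<Longrightarrow> r < n \<Longrightarrow> \<zeta> ^ r \<noteq> 1"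
    and "i < n" "j < n" "\<zeta> ^ i = \<zeta> ^ j"
  shows "i = j"
proof (rule ccontr)
  assume "i \<noteq> j"
  have "\<zeta> \<noteq> 0"
    using \<zeta> \<open>i < n\<close> by (metis less_nat_zero_code power_0_left zero_neq_one)
  have "\<zeta> ^ (max i j - min i j) = 1"
    using \<open>\<zeta> ^ i = \<zeta> ^ j\<close> \<open>\<zeta> \<noteq> 0\<close> by (cases "i \<le> j") (simp_all add: power_diff max_def min_def)
  then show False
    using primitive[of "max i j - min i j"] \<open>i \<noteq> j\<close> assms(3,4) by simp
qed

lemma sum_powers_root_of_unity_ratio:
  fixes \<zeta> :: "'a::field"
  assumes \<zeta>: "\<zeta> ^ n = 1" and primitive: "\<And>r. 0 < r \<Longrightarrow> r < n \<Longrightarrow> \<zeta> ^ r \<noteq> 1"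
    and "i < n" "j < n"
  shows "(\<Sum>r<n. (\<zeta> ^ i * inverse (\<zeta> ^ j)) ^ r) = (if i = j then of_nat n else 0)"
proof -
  have "\<zeta> \<noteq> 0"
    using \<zeta> \<open>i < n\<close> by (metis less_nat_zero_code power_0_left zero_neq_one)
  show ?thesis
  proof (cases "i = j")
    case False
    then have "\<zeta> ^ i * inverse (\<zeta> ^ j) \<noteq> 1"
      using root_of_unity_powers_inj[OF \<zeta> primitive \<open>i < n\<close> \<open>j < n\<close>] \<open>\<zeta> \<noteq> 0\<close> by (auto simp: field_simps)
    moreover have "(\<zeta> ^ m) ^ n = 1" for m
      by (metis \<zeta> mult.commute power_mult power_one)
    then have "(\<zeta> ^ i * inverse (\<zeta> ^ j)) ^ n = 1"
      by (simp add: power_mult_distrib power_inverse)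
    ultimately show ?thesis
      using False sum_powers_root_of_unity by simp
  qed (use \<open>\<zeta> \<noteq> 0\<close> in simp)
qed

lemma binomial_powers_roots_of_unity_independent:
  fixes \<zeta> :: "'a::real_normed_field" and c :: "nat \<Rightarrow> 'a"
  assumes \<zeta>: "\<zeta> ^ n = 1" and primitive: "\<And>r. 0 < r \<Longrightarrow> r < n \<Longrightarrow> \<zeta> ^ r \<noteq> 1"
    and S: "infinite S" and vanish: "\<And>\<mu>. \<mu> \<in> S \<Longrightarrow> (\<Sum>i<n. c i * (1 + \<zeta> ^ i * \<mu>) ^ n) = 0"
    and j: "j < n"
  shows "c j = 0"
proof -
  define T where "T r = (\<Sum>i<n. c i * (\<zeta> ^ i) ^ r)" for r
  have binomial: "(1 + z) ^ n = (\<Sum>r\<le>n. of_nat (n choose r) * z ^ r)" for z :: 'a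
    using binomial_ring[of z 1 n] by (simp add: add.commute)
  have "(\<Sum>i<n. c i * (1 + \<zeta> ^ i * \<mu>) ^ n) = (\<Sum>r\<le>n. (of_nat (n choose r) * T r) * \<mu> ^ r)" for \<mu>
  proof -
    have "(\<Sum>i<n. c i * (1 + \<zeta> ^ i * \<mu>) ^ n)
            = (\<Sum>i<n. \<Sum>r\<le>n. c i * (of_nat (n choose r) * (\<zeta> ^ i * \<mu>) ^ r))"
      by (simp add: binomial sum_distrib_left)
    also have "\<dots> = (\<Sum>r\<le>n. (of_nat (n choose r) * T r) * \<mu> ^ r)"
      by (subst sum.swap) (simp add: T_def sum_distrib_left sum_distrib_right power_mult_distrib mult_ac)
    finally show ?thesis .
  qed
  then have "S \<subseteq> {\<mu>. (\<Sum>r\<le>n. (of_nat (n choose r) * T r) * \<mu> ^ r) = 0}"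
    using vanish by auto
  then have "infinite {\<mu>. (\<Sum>r\<le>n. (of_nat (n choose r) * T r) * \<mu> ^ r) = 0}"
    using S finite_subset by blast
  then have T: "T r = 0" if "r \<le> n" for r
    using that polyfun_finite_roots by fastforce
  have "0 = (\<Sum>r<n. inverse (\<zeta> ^ j) ^ r * T r)"
    by (rule sum.neutral [symmetric]) (simp add: T)
  also have "\<dots> = (\<Sum>r<n. \<Sum>i<n. c i * (\<zeta> ^ i * inverse (\<zeta> ^ j)) ^ r)"
    by (simp add: T_def sum_distrib_left power_mult_distrib mult_ac)
  also have "\<dots> = (\<Sum>i<n. c i * (\<Sum>r<n. (\<zeta> ^ i * inverse (\<zeta> ^ j)) ^ r))"
    by (subst sum.swap) (simp add: sum_distrib_left)
  also have "\<dots> = of_nat n * c j"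
    using j by (simp add: sum_powers_root_of_unity_ratio[OF \<zeta> primitive _ j] if_distrib sum.delta cong: if_cong)
  finally show ?thesis
    using j by simp
qed

lemma infinite_range_e_of_real: "infinite (range (\<lambda>x::real. e (of_real x)))"
proof
  let ?R = "range (\<lambda>x::real. e (of_real x))"
  assume "finite ?R"
  have "continuous_on UNIV (\<lambda>x::real. e (of_real x))"
    unfolding e_def by (intro continuous_intros)
  then have "connected ?R"
    by (rule connected_continuous_image) simp
  moreover have "1 \<in> ?R"
    by (rule range_eqI[where x = 0]) (simp add: e_def)
  moreover have "- 1 \<in> ?R"
    by (rule range_eqI[where x = "1 / 2"]) (simp add: e_def)
  ultimately have "(1 :: complex) = - 1"
    using \<open>finite ?R\<close> connected_finite_iff_sing[of ?R] by (metis empty_iff singletonD)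
  then show False
    by simp
qed

lemma e_two_fifths_power_5: "e (2 / 5) ^ 5 = 1"
  using e_of_int[of 2] by (simp add: e_power)

lemma e_two_fifths_power_neq_1: "0 < r \<Longrightarrow> r < 5 \<Longrightarrow> e (2 / 5) ^ r \<noteq> 1"
proof
  assume r: "0 < r" "r < 5" and "e (2 / 5) ^ r = 1"
  moreover have "e (of_real (real r * (2 / 5))) = e (2 / 5) ^ r"
    by (simp add: e_power)
  ultimately have "real r * (2 / 5) \<in> \<int>"
    by (intro e_of_real_eq_1_imp_Ints) simp
  then obtain n :: int where "real r * (2 / 5) = of_int n"
    by (rule Ints_cases)
  then have "real_of_int (2 * int r) = real_of_int (5 * n)"
    by simp
  then have "2 * int r = 5 * n"
    by (simp only: of_int_eq_iff)
  then show False
    using r by presburger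
qed

theorem proposition7p16:
  fixes c :: "nat \<Rightarrow> nat \<Rightarrow> complex"
  assumes "\<And>\<tau> z. Im \<tau> > 0 \<Longrightarrow>
             (\<Sum>i<5. \<Sum>j<5. c i j * (theta (alphas i) (betas j) \<tau> z) ^ 5) = 0"
  shows "\<forall>i<5. \<forall>j<5. c i j = 0"
proof (intro allI impI)
  fix k j :: nat
  assume "k < 5" "j < 5"
  show "c k j = 0"
  proof (rule binomial_powers_roots_of_unity_independent
      [OF e_two_fifths_power_5 e_two_fifths_power_neq_1 infinite_range_e_of_real _ \<open>j < 5\<close>])
    fix \<mu>
    assume "\<mu> \<in> range (\<lambda>x::real. e (of_real x))"
    then show "(\<Sum>i<5. c k i * (1 + e (2 / 5) ^ i * \<mu>) ^ 5) = 0"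
      using theta_relation_binomial_row_eq_0[OF assms \<open>k < 5\<close>] by auto
  qed
qed

end
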